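(* Let $G=(V,E)$ be a finite simple graph and let $\widehat G$ be its associated 2-colored complete graph. Then $G$ is a threshold graph if and only if $\dim \mathcal{A}(\widehat G)=0$.
   Context: A simple graph $G=(V,E)$ is threshold if there are real vertex weights $c(v)$, $v\in V$, such that every pair $\{u,v\}\in\binom{V}{2}$ satisfies $c(u)+c(v)>0$ if $\{u,v\}\in E$ and $c(u)+c(v)<0$ if $\{u,v\}\notin E$. The associated 2-colored graph $\widehat G$ is the complete graph $(V,\binom{V}{2})$ in which a pair is colored red if it is an edge of $G$ and blue otherwise. For a 2-colored graph $H=(V,F)$ (edges colored red/blue), the alternating cone $\mathcal{A}(H)\subseteq\mathbb{R}^F$ is the set of $x\in\mathbb{R}^F$ with $x(e)\ge 0$ for all $e\in F$ and, for every vertex $v$, the sum of $x(e)$ over red edges $e$ incident with $v$ equals the sum of $x(e)$ over blue edges $e$ incident with $v$. *)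

theory Defs
  imports "HOL-Analysis.Analysis"
begin

text \<open>Vectors in R^F are represented as vectors in real ^ ('a set)
  whose coordinates outside F vanish (a canonical copy of R^F).\<close>

definition pairs :: "'a set \<Rightarrow> 'a set set" where
  "pairs V = {{u, v} | u v. u \<in> V \<and> v \<in> V \<and> u \<noteq> v}"

definition simple_graph :: "'a set \<Rightarrow> 'a set set \<Rightarrow> bool" where
  "simple_graph V E \<longleftrightarrow> finite V \<and> E \<subseteq> pairs V"

definition threshold_graph :: "'a set \<Rightarrow> 'a set set \<Rightarrow> bool" where
  "threshold_graph V E \<longleftrightarrow> (\<exists>c :: 'a \<Rightarrow> real.
     \<forall>u\<in>V. \<forall>v\<in>V. u \<noteq> v \<longrightarrow>
       ({u, v} \<in> E \<longrightarrow> c u + c v > 0) \<and> ({u, v} \<notin> E \<longrightarrow> c u + c v < 0))"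

text \<open>A 2-colored graph H = (V, F) with red edges R \<subseteq> F and blue edges F - R.\<close>
definition alternating_cone ::
  "'a::finite set \<Rightarrow> 'a set set \<Rightarrow> 'a set set \<Rightarrow> (real ^ ('a set)) set" where
  "alternating_cone V F R = {x.
     (\<forall>e. e \<notin> F \<longrightarrow> x $ e = 0) \<and>
     (\<forall>e\<in>F. x $ e \<ge> 0) \<and>
     (\<forall>v\<in>V. (\<Sum>e\<in>{e\<in>F. e \<in> R \<and> v \<in> e}. x $ e) = (\<Sum>e\<in>{e\<in>F. e \<notin> R \<and> v \<in> e}. x $ e))}"

definition hat_alternating_cone :: "'a::finite set \<Rightarrow> 'a set set \<Rightarrow> (real ^ ('a set)) set" where
  "hat_alternating_cone V E = alternating_cone V (pairs V) E"

end

theory Submission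
  imports Defs
begin

text \<open>Put \<open>s\<^sub>e = 1\<close> if the pair \<open>e\<close> is an edge of \<open>G\<close> and \<open>s\<^sub>e = -1\<close> otherwise, and let
  \<open>a\<^sub>e = s\<^sub>e \<cdot> \<chi>\<^sub>e\<close> be the signed indicator vector of \<open>e\<close>. Weights \<open>c\<close> witness that \<open>G\<close> is threshold
  iff \<open>\<langle>c, a\<^sub>e\<rangle> > 0\<close> for every pair \<open>e\<close>, and the balance conditions of the alternating cone
  say exactly \<open>\<Sum>\<^sub>e x\<^sub>e a\<^sub>e = 0\<close>. So the theorem is Gordan's alternative for the vectors \<open>a\<^sub>e\<close>:
  either some \<open>c\<close> is positive on all of them, or some nonzero nonnegative combination of them
  vanishes, i.e. the cone contains a point other than \<open>0\<close>.\<close>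

lemma gordan_alternative:
  fixes f :: "'i \<Rightarrow> 'a::euclidean_space"
  assumes "finite I" and "inj_on f I"
  shows "(\<exists>c. \<forall>i\<in>I. 0 < c \<bullet> f i) \<longleftrightarrow>
    (\<forall>u. (\<forall>i\<in>I. 0 \<le> u i) \<longrightarrow> (\<Sum>i\<in>I. u i *\<^sub>R f i) = 0 \<longrightarrow> (\<forall>i\<in>I. u i = 0))"
proof
  assume "\<exists>c. \<forall>i\<in>I. 0 < c \<bullet> f i"
  then obtain c where c: "\<And>i. i \<in> I \<Longrightarrow> 0 < c \<bullet> f i" by blast
  show "\<forall>u. (\<forall>i\<in>I. 0 \<le> u i) \<longrightarrow> (\<Sum>i\<in>I. u i *\<^sub>R f i) = 0 \<longrightarrow> (\<forall>i\<in>I. u i = 0)"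
  proof (intro allI impI)
    fix u assume nonneg: "\<forall>i\<in>I. 0 \<le> u i" and comb: "(\<Sum>i\<in>I. u i *\<^sub>R f i) = 0"
    have terms_nonneg: "0 \<le> u i * (c \<bullet> f i)" if "i \<in> I" for i
      using nonneg c that by (simp add: mult_nonneg_nonneg[OF _ less_imp_le])
    have "(\<Sum>i\<in>I. u i * (c \<bullet> f i)) = c \<bullet> (\<Sum>i\<in>I. u i *\<^sub>R f i)"
      by (simp add: inner_sum_right)
    also have "\<dots> = 0"
      using comb by simp
    finally have "\<forall>i\<in>I. u i * (c \<bullet> f i) = 0"
      using sum_nonneg_eq_0_iff[OF \<open>finite I\<close> terms_nonneg] by simp
    then show "\<forall>i\<in>I. u i = 0"
      using c by (metis less_irrefl mult_eq_0_iff)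
  qed
next
  assume only_trivial: "\<forall>u. (\<forall>i\<in>I. 0 \<le> u i) \<longrightarrow> (\<Sum>i\<in>I. u i *\<^sub>R f i) = 0 \<longrightarrow> (\<forall>i\<in>I. u i = 0)"
  have "0 \<notin> convex hull (f ` I)"
  proof
    assume "0 \<in> convex hull (f ` I)"
    then obtain v where v: "\<forall>y\<in>f ` I. 0 \<le> v y" "sum v (f ` I) = 1" "(\<Sum>y\<in>f ` I. v y *\<^sub>R y) = 0"
      unfolding convex_hull_finite[OF finite_imageI[OF \<open>finite I\<close>]] by blast
    have "(\<Sum>i\<in>I. v (f i) *\<^sub>R f i) = 0"
      using v(3) by (simp add: sum.reindex[OF \<open>inj_on f I\<close>])
    moreover have "\<forall>i\<in>I. 0 \<le> v (f i)"
      using v(1) by simp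
    ultimately have "\<forall>i\<in>I. v (f i) = 0"
      using spec[OF only_trivial, of "\<lambda>i. v (f i)"] by blast
    then show False
      using v(2) by (simp add: sum.reindex[OF \<open>inj_on f I\<close>])
  qed
  moreover have "convex (convex hull (f ` I))" "closed (convex hull (f ` I))"
    using \<open>finite I\<close> by (simp_all add: compact_imp_closed finite_imp_compact_convex_hull)
  ultimately obtain c b where "0 < b" "\<forall>y\<in>convex hull (f ` I). b < c \<bullet> y"
    using separating_hyperplane_closed_0 by blast
  then have "0 < c \<bullet> f i" if "i \<in> I" for i
    using hull_inc[of "f i" "f ` I" convex] that by force
  then show "\<exists>c. \<forall>i\<in>I. 0 < c \<bullet> f i" by blast
qed

lemma aff_dim_eq_0_iff_eq_singleton_0:
  fixes S :: "'a::euclidean_space set"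
  assumes "0 \<in> S"
  shows "aff_dim S = 0 \<longleftrightarrow> S = {0}"
  using assms by (auto simp: aff_dim_eq_0)

definition edge_sign :: "'a set set \<Rightarrow> 'a set \<Rightarrow> real" where
  "edge_sign E e = (if e \<in> E then 1 else -1)"

definition signed_incidence :: "'a set set \<Rightarrow> 'a set \<Rightarrow> real ^ 'a" where
  "signed_incidence E e = (\<chi> w. if w \<in> e then edge_sign E e else 0)"

lemma inner_signed_incidence_doubleton:
  assumes "u \<noteq> v"
  shows "c \<bullet> signed_incidence E {u, v} = edge_sign E {u, v} * (c $ u + c $ v)"
proof -
  have "c \<bullet> signed_incidence E {u, v} = (\<Sum>w\<in>UNIV. if w \<in> {u, v} then c $ w * edge_sign E {u, v} else 0)"
    unfolding inner_vec_def signed_incidence_def by (rule sum.cong) auto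
  also have "\<dots> = (\<Sum>w\<in>{u, v}. c $ w * edge_sign E {u, v})"
    by (simp only: sum.inter_restrict[OF finite, symmetric]) simp
  finally show ?thesis
    using assms by (simp add: algebra_simps)
qed

lemma inj_on_signed_incidence: "inj_on (signed_incidence E) (pairs V)"
proof
  fix e e' assume "e \<in> pairs V" "e' \<in> pairs V" "signed_incidence E e = signed_incidence E e'"
  moreover have "e \<noteq> {}" "e' \<noteq> {}"
    using \<open>e \<in> pairs V\<close> \<open>e' \<in> pairs V\<close> by (auto simp: pairs_def)
  ultimately have "\<forall>w. w \<in> e \<longleftrightarrow> w \<in> e'"
    by (auto simp: signed_incidence_def edge_sign_def vec_eq_iff split: if_splits)
  then show "e = e'" by blast
qed

lemma threshold_graph_iff_signed_incidence:
  "threshold_graph V E \<longleftrightarrow> (\<exists>c. \<forall>e\<in>pairs V. 0 < c \<bullet> signed_incidence E e)"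
proof
  assume "threshold_graph V E"
  then obtain c :: "'a \<Rightarrow> real" where c: "\<And>u v. u \<in> V \<Longrightarrow> v \<in> V \<Longrightarrow> u \<noteq> v \<Longrightarrow>
      ({u, v} \<in> E \<longrightarrow> 0 < c u + c v) \<and> ({u, v} \<notin> E \<longrightarrow> c u + c v < 0)"
    unfolding threshold_graph_def by blast
  have "0 < (\<chi> w. c w) \<bullet> signed_incidence E e" if e_pair: "e \<in> pairs V" for e
  proof -
    obtain u v where "e = {u, v}" "u \<in> V" "v \<in> V" "u \<noteq> v"
      using e_pair unfolding pairs_def by blast
    then show ?thesis
      using c[of u v] by (auto simp: inner_signed_incidence_doubleton edge_sign_def)
  qed
  then show "\<exists>c. \<forall>e\<in>pairs V. 0 < c \<bullet> signed_incidence E e" by blast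
next
  assume "\<exists>c. \<forall>e\<in>pairs V. 0 < c \<bullet> signed_incidence E e"
  then obtain c where c: "\<And>e. e \<in> pairs V \<Longrightarrow> 0 < c \<bullet> signed_incidence E e" by blast
  show "threshold_graph V E"
    unfolding threshold_graph_def
  proof (intro exI[of _ "\<lambda>w. c $ w"] ballI impI)
    fix u v assume "u \<in> V" "v \<in> V" "u \<noteq> v"
    then have "0 < edge_sign E {u, v} * (c $ u + c $ v)"
      using c[of "{u, v}"] by (auto simp: pairs_def inner_signed_incidence_doubleton)
    then show "({u, v} \<in> E \<longrightarrow> 0 < c $ u + c $ v) \<and> ({u, v} \<notin> E \<longrightarrow> c $ u + c $ v < 0)"
      by (auto simp: edge_sign_def)
  qed
qed

lemma signed_incidence_sum_component:
  assumes "finite P"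
  shows "(\<Sum>e\<in>P. x e *\<^sub>R signed_incidence E e) $ v
    = (\<Sum>e\<in>{e\<in>P. e \<in> E \<and> v \<in> e}. x e) - (\<Sum>e\<in>{e\<in>P. e \<notin> E \<and> v \<in> e}. x e)"
proof -
  have "(\<Sum>e\<in>P. x e *\<^sub>R signed_incidence E e) $ v
      = (\<Sum>e\<in>P. if v \<in> e then (if e \<in> E then x e else - x e) else 0)"
    unfolding sum_component by (rule sum.cong) (auto simp: signed_incidence_def edge_sign_def)
  also have "\<dots> = (\<Sum>e\<in>{e\<in>P. v \<in> e}. if e \<in> E then x e else - x e)"
    by (rule sum.inter_filter[OF assms, symmetric])
  also have "\<dots> = (\<Sum>e\<in>{e\<in>P. e \<in> E \<and> v \<in> e}. x e) - (\<Sum>e\<in>{e\<in>P. e \<notin> E \<and> v \<in> e}. x e)"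
    using assms by (simp add: sum.If_cases sum_negf Int_def conj_ac)
  finally show ?thesis .
qed

lemma mem_hat_alternating_cone_iff:
  "x \<in> hat_alternating_cone V E \<longleftrightarrow>
    (\<forall>e. e \<notin> pairs V \<longrightarrow> x $ e = 0) \<and> (\<forall>e\<in>pairs V. 0 \<le> x $ e) \<and>
    (\<Sum>e\<in>pairs V. x $ e *\<^sub>R signed_incidence E e) = 0"
proof -
  let ?red = "\<lambda>v. \<Sum>e\<in>{e\<in>pairs V. e \<in> E \<and> v \<in> e}. x $ e"
  let ?blue = "\<lambda>v. \<Sum>e\<in>{e\<in>pairs V. e \<notin> E \<and> v \<in> e}. x $ e"
  have "?red v = 0 \<and> ?blue v = 0" if "v \<notin> V" for v
  proof -
    have "{e\<in>pairs V. v \<in> e} = {}"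
      using that by (auto simp: pairs_def)
    then have "{e\<in>pairs V. e \<in> E \<and> v \<in> e} = {}" "{e\<in>pairs V. e \<notin> E \<and> v \<in> e} = {}"
      by blast+
    then show ?thesis by (metis sum.empty)
  qed
  then have "(\<forall>v\<in>V. ?red v = ?blue v) \<longleftrightarrow> (\<forall>v. ?red v - ?blue v = 0)"
    by force
  also have "\<dots> \<longleftrightarrow> (\<Sum>e\<in>pairs V. x $ e *\<^sub>R signed_incidence E e) = 0"
    by (simp only: vec_eq_iff zero_index signed_incidence_sum_component[OF finite])
  finally show ?thesis
    unfolding hat_alternating_cone_def alternating_cone_def by blast
qed

lemma hat_alternating_cone_eq_0_iff:
  "hat_alternating_cone V E = {0} \<longleftrightarrow>
    (\<forall>u. (\<forall>e\<in>pairs V. 0 \<le> u e) \<longrightarrow> (\<Sum>e\<in>pairs V. u e *\<^sub>R signed_incidence E e) = 0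
      \<longrightarrow> (\<forall>e\<in>pairs V. u e = 0))"
proof (intro iffI allI impI ballI)
  fix u e
  assume cone_0: "hat_alternating_cone V E = {0}"
    and nonneg: "\<forall>e\<in>pairs V. 0 \<le> u e"
    and comb: "(\<Sum>e\<in>pairs V. u e *\<^sub>R signed_incidence E e) = 0"
    and e_pair: "e \<in> pairs V"
  define x :: "real ^ ('a set)" where "x = (\<chi> e. if e \<in> pairs V then u e else 0)"
  have "(\<Sum>e\<in>pairs V. x $ e *\<^sub>R signed_incidence E e) = 0"
    using comb by (simp add: x_def)
  then have "x \<in> hat_alternating_cone V E"
    using nonneg by (simp add: mem_hat_alternating_cone_iff x_def)
  then have "x $ e = 0"
    using cone_0 by simp
  then show "u e = 0"
    using e_pair by (simp add: x_def)
next
  assume only_trivial: "\<forall>u. (\<forall>e\<in>pairs V. 0 \<le> u e) \<longrightarrow>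
    (\<Sum>e\<in>pairs V. u e *\<^sub>R signed_incidence E e) = 0 \<longrightarrow> (\<forall>e\<in>pairs V. u e = 0)"
  have "x = 0" if "x \<in> hat_alternating_cone V E" for x
  proof -
    have outside: "\<forall>e. e \<notin> pairs V \<longrightarrow> x $ e = 0"
      and nonneg: "\<forall>e\<in>pairs V. 0 \<le> x $ e"
      and comb: "(\<Sum>e\<in>pairs V. x $ e *\<^sub>R signed_incidence E e) = 0"
      using that unfolding mem_hat_alternating_cone_iff by blast+
    have "\<forall>e\<in>pairs V. x $ e = 0"
      using spec[OF only_trivial, of "\<lambda>e. x $ e"] nonneg comb by blast
    with outside show "x = 0"
      unfolding vec_eq_iff by (metis zero_index)
  qed
  moreover have "0 \<in> hat_alternating_cone V E"
    by (simp add: mem_hat_alternating_cone_iff)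
  ultimately show "hat_alternating_cone V E = {0}" by blast
qed

theorem theorem2p1:
  fixes V :: "'a::finite set" and E :: "'a set set"
  assumes "simple_graph V E"
  shows "threshold_graph V E \<longleftrightarrow> aff_dim (hat_alternating_cone V E) = 0"
proof -
  have "threshold_graph V E \<longleftrightarrow> (\<exists>c. \<forall>e\<in>pairs V. 0 < c \<bullet> signed_incidence E e)"
    by (rule threshold_graph_iff_signed_incidence)
  also have "\<dots> \<longleftrightarrow> hat_alternating_cone V E = {0}"
    unfolding hat_alternating_cone_eq_0_iff
    by (rule gordan_alternative[OF finite inj_on_signed_incidence])
  also have "\<dots> \<longleftrightarrow> aff_dim (hat_alternating_cone V E) = 0"
    by (simp add: aff_dim_eq_0_iff_eq_singleton_0 mem_hat_alternating_cone_iff)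
  finally show ?thesis .
qed

end
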